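(* Let $R$ be an associative unital division ring over a field $F$ of characteristic $0$ and let $p,q\in F$. Suppose $u_{m,n}\in R$ and invertible $v_{m,n}\in R$ ($(m,n)\in\mathbb{Z}^2$) satisfy for all $(m,n)$ $$p\,v_{m,n+1}=u_{m,n+1}-u_{m+1,n},\qquad q\,v_{m,n}^{-1}=u_{m,n-1}-u_{m+1,n}.$$ Then for all $(m,n)$: $$(u_{m,n+1}-u_{m+1,n})(u_{m,n}-u_{m+1,n+1})=pq,\qquad (u_{m,n}-u_{m+1,n+1})(u_{m,n+1}-u_{m+1,n})=pq,$$ and $$p\,(v_{m,n}-v_{m+1,n+1})=q\,(v_{m,n+1}^{-1}-v_{m+1,n}^{-1}).$$ *)

theory Defs
  imports Main
begin

text \<open>An algebra structure of a unital ring R over a field F is given by its structure map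
  phi : F -> R, a unital ring homomorphism whose image lies in the centre of R.
  The F-action is then  c . x = phi c * x.\<close>
definition algebra_map :: "('f::field \<Rightarrow> 'r::ring_1) \<Rightarrow> bool" where
  "algebra_map phi \<longleftrightarrow>
     phi 1 = 1 \<and>
     (\<forall>a b. phi (a + b) = phi a + phi b) \<and>
     (\<forall>a b. phi (a * b) = phi a * phi b) \<and>
     (\<forall>a x. phi a * x = x * phi a)"

end

theory Submission
  imports Defs
begin

text \<open>Both differences of diagonally opposite values of u on a unit square are read off the
  lattice equations: u(m,n+1) - u(m+1,n) = p v(m,n+1) and u(m,n) - u(m+1,n+1) = q v(m,n+1)^-1.
  Their product is pq in either order, because the scalars are central and cancel the pair
  v(m,n+1), v(m,n+1)^-1. The relation between the v's is the sum of four lattice equations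
  around the point (m+1,n), in which all values of u cancel.\<close>

lemma algebra_map_mult:
  assumes "algebra_map phi"
  shows "phi (a * b) = phi a * phi b"
  using assms unfolding algebra_map_def by blast

lemma algebra_map_commute:
  assumes "algebra_map phi"
  shows "phi a * x = x * phi a"
  using assms unfolding algebra_map_def by blast

lemma mult_commute_cancel_inverse:
  fixes x :: "'a::division_ring"
  assumes "x \<noteq> 0" and "b * x = x * b"
  shows "a * x * (b * inverse x) = a * b"
proof -
  have "a * x * (b * inverse x) = a * (x * b) * inverse x"
    by (simp only: mult.assoc)
  also have "\<dots> = a * b * (x * inverse x)"
    by (simp only: assms(2) [symmetric] mult.assoc)
  finally show ?thesis
    using assms(1) by simp
qed

lemma lattice_diagonal_products:
  fixes P Q :: "'r::division_ring" and u v :: "int \<Rightarrow> int \<Rightarrow> 'r"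
  assumes commute: "\<And>m n. P * v m n = v m n * P" "\<And>m n. Q * v m n = v m n * Q"
    and nonzero: "\<And>m n. v m n \<noteq> 0"
    and eq1: "\<And>m n. P * v m (n + 1) = u m (n + 1) - u (m + 1) n"
    and eq2: "\<And>m n. Q * inverse (v m n) = u m (n - 1) - u (m + 1) n"
  shows "(u m (n + 1) - u (m + 1) n) * (u m n - u (m + 1) (n + 1)) = P * Q"
    and "(u m n - u (m + 1) (n + 1)) * (u m (n + 1) - u (m + 1) n) = Q * P"
proof -
  let ?w = "v m (n + 1)"
  have diff1: "u m (n + 1) - u (m + 1) n = P * ?w"
    using eq1 [of m n] by simp
  have diff2: "u m n - u (m + 1) (n + 1) = Q * inverse ?w"
    using eq2 [of m "n + 1"] by simp
  have "P * ?w * (Q * inverse ?w) = P * Q"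
    using nonzero commute(2) by (simp add: mult_commute_cancel_inverse)
  moreover have "Q * inverse ?w * (P * ?w) = Q * P"
    using mult_commute_cancel_inverse [of "inverse ?w" P Q] nonzero commute(1)
    by (simp add: mult_commute_imp_mult_inverse_commute)
  ultimately show "(u m (n + 1) - u (m + 1) n) * (u m n - u (m + 1) (n + 1)) = P * Q"
    and "(u m n - u (m + 1) (n + 1)) * (u m (n + 1) - u (m + 1) n) = Q * P"
    by (simp_all only: diff1 diff2)
qed

lemma lattice_v_relation:
  fixes P Q :: "'r::ring" and w u v :: "int \<Rightarrow> int \<Rightarrow> 'r"
  assumes eq1: "\<And>m n. P * v m (n + 1) = u m (n + 1) - u (m + 1) n"
    and eq2: "\<And>m n. Q * w m n = u m (n - 1) - u (m + 1) n"
  shows "P * (v m n - v (m + 1) (n + 1)) = Q * (w m (n + 1) - w (m + 1) n)"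
proof -
  have "P * v m n = u m n - u (m + 1) (n - 1)"
    using eq1 [of m "n - 1"] by simp
  moreover have "P * v (m + 1) (n + 1) = u (m + 1) (n + 1) - u (m + 2) n"
    using eq1 [of "m + 1" n] by (simp add: add.assoc)
  moreover have "Q * w m (n + 1) = u m n - u (m + 1) (n + 1)"
    using eq2 [of m "n + 1"] by simp
  moreover have "Q * w (m + 1) n = u (m + 1) (n - 1) - u (m + 2) n"
    using eq2 [of "m + 1" n] by (simp add: add.assoc)
  ultimately show ?thesis
    by (simp add: right_diff_distrib)
qed

theorem theorem5p4:
  fixes phi :: "'f::field_char_0 \<Rightarrow> 'r::division_ring"
    and p q :: 'f
    and u v :: "int \<Rightarrow> int \<Rightarrow> 'r"
  assumes alg: "algebra_map phi"
    and inv: "\<And>m n. v m n \<noteq> 0"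
    and eq1: "\<And>m n. phi p * v m (n + 1) = u m (n + 1) - u (m + 1) n"
    and eq2: "\<And>m n. phi q * inverse (v m n) = u m (n - 1) - u (m + 1) n"
  shows "\<forall>m n.
     (u m (n + 1) - u (m + 1) n) * (u m n - u (m + 1) (n + 1)) = phi (p * q) \<and>
     (u m n - u (m + 1) (n + 1)) * (u m (n + 1) - u (m + 1) n) = phi (p * q) \<and>
     phi p * (v m n - v (m + 1) (n + 1)) =
       phi q * (inverse (v m (n + 1)) - inverse (v (m + 1) n))"
proof (intro allI conjI)
  fix m n :: int
  have pq: "phi (p * q) = phi p * phi q" and qp: "phi (p * q) = phi q * phi p"
    using algebra_map_mult [OF alg] by (metis mult.commute)+
  note products = lattice_diagonal_products [where P = "phi p" and Q = "phi q" and u = u and v = v,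
      OF algebra_map_commute [OF alg] algebra_map_commute [OF alg] inv eq1 eq2]
  show "(u m (n + 1) - u (m + 1) n) * (u m n - u (m + 1) (n + 1)) = phi (p * q)"
    using products(1) pq by simp
  show "(u m n - u (m + 1) (n + 1)) * (u m (n + 1) - u (m + 1) n) = phi (p * q)"
    using products(2) qp by simp
  show "phi p * (v m n - v (m + 1) (n + 1)) =
      phi q * (inverse (v m (n + 1)) - inverse (v (m + 1) n))"
    by (rule lattice_v_relation [where u = u, OF eq1 eq2])
qed

end
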